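(* Let $f:\mathbb{R}^n\times\mathbb{R}^m\to\mathbb{R}$ be twice continuously differentiable, $\mu$-strongly convex in $x$ for every fixed $y$ and $\mu$-strongly concave in $y$ for every fixed $x$ ($\mu>0$). Write $z=(x;y)$, $F(z)=(\nabla_x f(x,y);-\nabla_y f(x,y))$, and assume the largest singular value of $\nabla F(z)$ is at most $L$ for all $z$. Let $m(z)=\frac12\|F(z)\|^2$. Then for every $z=(x;y)$, $$\frac{\mu}{L^2}m(z)\le \max_{y'\in\mathbb{R}^m}f(x,y')-\min_{x'\in\mathbb{R}^n}f(x',y)\le \frac{L}{\mu^2}m(z).$$
   Context: $\|\cdot\|$ is the Euclidean norm for vectors and the largest singular value for matrices. *)

theory Defs
  imports "HOL-Analysis.Analysis"
begin

definition strongly_convex_on :: "'a::real_inner set \<Rightarrow> real \<Rightarrow> ('a \<Rightarrow> real) \<Rightarrow> bool" where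
  "strongly_convex_on S \<mu> g \<longleftrightarrow> convex_on S (\<lambda>x. g x - \<mu> / 2 * (norm x)\<^sup>2)"

definition C2 :: "('a::real_normed_vector \<Rightarrow> real) \<Rightarrow> bool" where
  "C2 g \<longleftrightarrow> (\<exists>Dg D2g. (\<forall>p. (g has_derivative blinfun_apply (Dg p)) (at p)) \<and>
                      (\<forall>p. (Dg has_derivative blinfun_apply (D2g p)) (at p)) \<and>
                      continuous_on UNIV D2g)"

definition grad :: "('a::real_inner \<Rightarrow> real) \<Rightarrow> 'a \<Rightarrow> 'a" where
  "grad g p = (THE v. (g has_derivative (\<lambda>h. v \<bullet> h)) (at p))"

definition saddle_op :: "('a::real_inner \<Rightarrow> 'b::real_inner \<Rightarrow> real) \<Rightarrow> 'a \<times> 'b \<Rightarrow> 'a \<times> 'b" where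
  "saddle_op f z = (grad (\<lambda>x'. f x' (snd z)) (fst z), - grad (\<lambda>y'. f (fst z) y') (snd z))"

end

theory Submission
  imports Defs
begin

(* The duality gap splits as (f(x,y) - min f(.,y)) + (max f(x,.) - f(x,y)), the suboptimality
   gaps of the mu-strongly convex functions f(.,y) and -f(x,.). Their gradients are the two
   blocks of F, which is L-Lipschitz by the mean value inequality. For a mu-strongly convex g
   with L-Lipschitz gradient, completing the square in the strong convexity bound gives
   g x - inf g <= |grad g x|^2/(2 mu), and the descent lemma along the gradient step of length
   1/L gives g x - inf g >= |grad g x|^2/(2 L). Adding both gaps, |F z|^2 is the sum of the
   squared partial gradients, and mu <= L turns 1/L and 1/mu into mu/L^2 and L/mu^2. *)

lemma convex_on_has_derivative_above_tangent:
  fixes h :: "'a::real_normed_vector \<Rightarrow> real"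
  assumes convex: "convex_on UNIV h" and deriv: "(h has_derivative h') (at x)"
  shows "h x + h' (y - x) \<le> h y"
proof -
  define \<psi> where "\<psi> t = h (x + t *\<^sub>R (y - x))" for t :: real
  have "convex_on UNIV \<psi>"
  proof (rule convex_onI)
    fix t a b :: real assume "0 < t" "t < 1"
    moreover have "x + ((1 - t) *\<^sub>R a + t *\<^sub>R b) *\<^sub>R (y - x)
        = (1 - t) *\<^sub>R (x + a *\<^sub>R (y - x)) + t *\<^sub>R (x + b *\<^sub>R (y - x))"
      by (simp add: algebra_simps)
    ultimately show "\<psi> ((1 - t) *\<^sub>R a + t *\<^sub>R b) \<le> (1 - t) * \<psi> a + t * \<psi> b"
      unfolding \<psi>_def using convex_onD[OF convex] by simp
  qed simp
  moreover have "(\<psi> has_field_derivative h' (y - x)) (at 0)"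
  proof -
    have "((\<lambda>t. x + t *\<^sub>R (y - x)) has_derivative (\<lambda>s. s *\<^sub>R (y - x))) (at 0)"
      by (auto intro!: derivative_eq_intros)
    moreover have "(h has_derivative h') (at (x + 0 *\<^sub>R (y - x)))"
      using deriv by simp
    ultimately have "(\<psi> has_derivative (\<lambda>s. h' (s *\<^sub>R (y - x)))) (at 0)"
      unfolding \<psi>_def by (rule has_derivative_compose)
    moreover have "h' (s *\<^sub>R (y - x)) = s * h' (y - x)" for s
      using linear_scale[OF bounded_linear.linear[OF has_derivative_bounded_linear[OF deriv]]]
      by simp
    ultimately show ?thesis
      by (simp add: has_field_derivative_def mult.commute[of _ "h' (y - x)"])
  qed
  ultimately have "h' (y - x) * (1 - 0) \<le> \<psi> 1 - \<psi> 0"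
    by (intro convex_on_imp_above_tangent) (auto intro: has_field_derivative_at_within)
  then show ?thesis
    by (simp add: \<psi>_def)
qed

lemma strongly_convex_on_imp_above_tangent:
  fixes g :: "'a::real_inner \<Rightarrow> real"
  assumes "strongly_convex_on UNIV \<mu> g" and "(g has_derivative (\<lambda>h. v \<bullet> h)) (at x)"
  shows "g x + v \<bullet> (y - x) + \<mu> / 2 * (norm (y - x))\<^sup>2 \<le> g y"
proof -
  have "((\<lambda>z. g z - \<mu> / 2 * (norm z)\<^sup>2) has_derivative (\<lambda>h. v \<bullet> h - \<mu> / 2 * (2 *\<^sub>R (x \<bullet> h)))) (at x)"
    using assms(2) by (auto intro!: derivative_eq_intros)
  with assms(1) have "g x - \<mu> / 2 * (norm x)\<^sup>2 + (v \<bullet> (y - x) - \<mu> * (x \<bullet> (y - x)))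
      \<le> g y - \<mu> / 2 * (norm y)\<^sup>2"
    unfolding strongly_convex_on_def by (auto dest: convex_on_has_derivative_above_tangent)
  moreover have "(norm y)\<^sup>2 = (norm x)\<^sup>2 + 2 * (x \<bullet> (y - x)) + (norm (y - x))\<^sup>2"
    by (simp add: power2_norm_eq_inner algebra_simps inner_commute)
  ultimately show ?thesis
    by (simp add: algebra_simps)
qed

lemma lipschitz_gradient_imp_below_tangent:
  fixes g :: "'a::real_inner \<Rightarrow> real"
  assumes deriv: "\<And>z. (g has_derivative (\<lambda>h. G z \<bullet> h)) (at z)"
    and lipschitz: "\<And>a b. norm (G a - G b) \<le> L * norm (a - b)"
  shows "g (x + d) \<le> g x + G x \<bullet> d + L / 2 * (norm d)\<^sup>2"
proof -
  define \<phi> where "\<phi> t = g (x + t *\<^sub>R d) - t * (G x \<bullet> d) - L / 2 * t\<^sup>2 * (norm d)\<^sup>2" for t :: real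
  have "\<phi> 1 \<le> \<phi> 0"
  proof (rule DERIV_nonpos_imp_nonincreasing[of 0 1 \<phi>])
    fix t :: real assume t: "0 \<le> t" "t \<le> 1"
    have "((\<lambda>t. x + t *\<^sub>R d) has_derivative (\<lambda>s. s *\<^sub>R d)) (at t)"
      by (auto intro!: derivative_eq_intros)
    from has_derivative_compose[OF this deriv]
    have "((\<lambda>t. g (x + t *\<^sub>R d)) has_field_derivative G (x + t *\<^sub>R d) \<bullet> d) (at t)"
      unfolding has_field_derivative_def by (rule has_derivative_eq_rhs) (auto simp: fun_eq_iff)
    then have \<phi>_deriv: "(\<phi> has_field_derivative G (x + t *\<^sub>R d) \<bullet> d - G x \<bullet> d - L * t * (norm d)\<^sup>2) (at t)"
      unfolding \<phi>_def by (auto intro!: derivative_eq_intros simp: algebra_simps)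
    have "G (x + t *\<^sub>R d) \<bullet> d - G x \<bullet> d = (G (x + t *\<^sub>R d) - G x) \<bullet> d"
      by (simp add: inner_diff_left)
    also have "\<dots> \<le> norm (G (x + t *\<^sub>R d) - G x) * norm d"
      by (rule norm_cauchy_schwarz)
    also have "\<dots> \<le> L * norm (t *\<^sub>R d) * norm d"
      using lipschitz[of "x + t *\<^sub>R d" x] by (simp add: mult_right_mono)
    also have "\<dots> = L * t * (norm d)\<^sup>2"
      using t by (simp add: power2_eq_square)
    finally show "\<exists>y. (\<phi> has_field_derivative y) (at t) \<and> y \<le> 0"
      using \<phi>_deriv by auto
  qed simp
  then show ?thesis
    by (simp add: \<phi>_def)
qed

lemma strongly_convex_modulus_le_lipschitz_constant:
  fixes g :: "'a::euclidean_space \<Rightarrow> real"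
  assumes convex: "strongly_convex_on UNIV \<mu> g"
    and deriv: "\<And>z. (g has_derivative (\<lambda>h. G z \<bullet> h)) (at z)"
    and lipschitz: "\<And>a b. norm (G a - G b) \<le> L * norm (a - b)"
  shows "\<mu> \<le> L"
proof -
  obtain v :: 'a where v: "v \<noteq> 0"
    using nonempty_Basis nonzero_Basis by blast
  have "g 0 + G 0 \<bullet> v + \<mu> / 2 * (norm v)\<^sup>2 \<le> g v"
    using strongly_convex_on_imp_above_tangent[OF convex deriv, of 0 v] by simp
  moreover have "g (0 + v) \<le> g 0 + G 0 \<bullet> v + L / 2 * (norm v)\<^sup>2"
    by (rule lipschitz_gradient_imp_below_tangent[OF deriv lipschitz])
  ultimately have "\<mu> * (norm v)\<^sup>2 \<le> L * (norm v)\<^sup>2"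
    by simp
  with v show ?thesis
    by simp
qed

lemma strongly_convex_on_lower_bound:
  fixes g :: "'a::real_inner \<Rightarrow> real"
  assumes "strongly_convex_on UNIV \<mu> g" and "(g has_derivative (\<lambda>h. v \<bullet> h)) (at x)"
    and "\<mu> > 0"
  shows "g x - (norm v)\<^sup>2 / (2 * \<mu>) \<le> g z"
proof -
  have "- (norm v)\<^sup>2 / (2 * \<mu>) \<le> - (norm v * norm (z - x)) + \<mu> / 2 * (norm (z - x))\<^sup>2"
  proof -
    have "0 \<le> (\<mu> * norm (z - x) - norm v)\<^sup>2 / (2 * \<mu>)"
      using \<open>\<mu> > 0\<close> by simp
    also have "\<dots> = \<mu> / 2 * (norm (z - x))\<^sup>2 - norm v * norm (z - x) + (norm v)\<^sup>2 / (2 * \<mu>)"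
      using \<open>\<mu> > 0\<close> by (simp add: field_simps power2_eq_square)
    finally show ?thesis
      by simp
  qed
  also have "- (norm v * norm (z - x)) \<le> v \<bullet> (z - x)"
    using norm_cauchy_schwarz[of "- v" "z - x"] by simp
  then have "- (norm v * norm (z - x)) + \<mu> / 2 * (norm (z - x))\<^sup>2 \<le> g z - g x"
    using strongly_convex_on_imp_above_tangent[OF assms(1,2), of z] by linarith
  finally show ?thesis
    by simp
qed

lemma lipschitz_gradient_suboptimality_ge:
  fixes g :: "'a::real_inner \<Rightarrow> real"
  assumes deriv: "\<And>z. (g has_derivative (\<lambda>h. G z \<bullet> h)) (at z)"
    and lipschitz: "\<And>a b. norm (G a - G b) \<le> L * norm (a - b)"
    and bounded: "bdd_below (range g)"
  shows "(norm (G x))\<^sup>2 / (2 * L) \<le> g x - (INF z. g z)"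
proof (cases "L > 0")
  case True
  have "(INF z. g z) \<le> g (x + (- (1 / L) *\<^sub>R G x))"
    using bounded by (rule cINF_lower) simp
  also have "\<dots> \<le> g x + G x \<bullet> (- (1 / L) *\<^sub>R G x) + L / 2 * (norm (- (1 / L) *\<^sub>R G x))\<^sup>2"
    by (rule lipschitz_gradient_imp_below_tangent[OF deriv lipschitz])
  also have "\<dots> = g x - (norm (G x))\<^sup>2 / (2 * L)"
    using True by (simp add: power2_norm_eq_inner[symmetric] power_mult_distrib field_simps power2_eq_square)
  finally show ?thesis
    by simp
next
  case False
  then have "(norm (G x))\<^sup>2 / (2 * L) \<le> 0"
    by (simp add: divide_nonneg_nonpos)
  also have "0 \<le> g x - (INF z. g z)"
    using bounded by (simp add: cINF_lower)
  finally show ?thesis .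
qed

lemma strongly_convex_on_suboptimality_bounds:
  fixes g :: "'a::real_inner \<Rightarrow> real"
  assumes convex: "strongly_convex_on UNIV \<mu> g"
    and deriv: "\<And>z. (g has_derivative (\<lambda>h. G z \<bullet> h)) (at z)"
    and lipschitz: "\<And>a b. norm (G a - G b) \<le> L * norm (a - b)"
    and "\<mu> > 0"
  shows "(norm (G x))\<^sup>2 / (2 * L) \<le> g x - (INF z. g z)"
    and "g x - (INF z. g z) \<le> (norm (G x))\<^sup>2 / (2 * \<mu>)"
proof -
  note lower_bound = strongly_convex_on_lower_bound[OF convex deriv \<open>\<mu> > 0\<close>]
  then have "bdd_below (range g)"
    by (intro bdd_belowI[of _ "g x - (norm (G x))\<^sup>2 / (2 * \<mu>)"]) auto
  then show "(norm (G x))\<^sup>2 / (2 * L) \<le> g x - (INF z. g z)"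
    by (rule lipschitz_gradient_suboptimality_ge[OF deriv lipschitz])
  have "g x - (norm (G x))\<^sup>2 / (2 * \<mu>) \<le> (INF z. g z)"
    using lower_bound by (rule cINF_greatest[OF UNIV_not_empty])
  then show "g x - (INF z. g z) \<le> (norm (G x))\<^sup>2 / (2 * \<mu>)"
    by simp
qed

lemma linear_eq_inner_sum_Basis:
  fixes l :: "'a::euclidean_space \<Rightarrow> real"
  assumes "linear l"
  shows "l h = (\<Sum>b\<in>Basis. l b *\<^sub>R b) \<bullet> h"
proof -
  have "l h = l (\<Sum>b\<in>Basis. (h \<bullet> b) *\<^sub>R b)"
    by (simp add: euclidean_representation)
  also have "\<dots> = (\<Sum>b\<in>Basis. (h \<bullet> b) * l b)"
    using assms by (simp add: linear_sum linear_scale)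
  also have "\<dots> = (\<Sum>b\<in>Basis. l b *\<^sub>R b) \<bullet> h"
    by (simp add: inner_sum_left inner_sum_right inner_commute mult.commute)
  finally show ?thesis .
qed

lemma grad_eqI:
  fixes g :: "'a::real_inner \<Rightarrow> real"
  assumes "(g has_derivative (\<lambda>h. v \<bullet> h)) (at p)"
  shows "grad g p = v"
  unfolding grad_def
proof (rule the_equality)
  fix w assume "(g has_derivative (\<lambda>h. w \<bullet> h)) (at p)"
  from this assms have "(\<lambda>h. w \<bullet> h) = (\<lambda>h. v \<bullet> h)"
    by (rule has_derivative_unique)
  then have "(w - v) \<bullet> (w - v) = 0"
    by (metis inner_diff_left right_minus_eq)
  then show "w = v"
    by simp
qed (rule assms)

lemma grad_eq_sum_Basis:
  fixes g :: "'a::euclidean_space \<Rightarrow> real"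
  assumes "(g has_derivative l) (at p)"
  shows "grad g p = (\<Sum>b\<in>Basis. l b *\<^sub>R b)"
proof (rule grad_eqI)
  have "linear l"
    using assms by (simp add: has_derivative_linear)
  with assms show "(g has_derivative (\<lambda>h. (\<Sum>b\<in>Basis. l b *\<^sub>R b) \<bullet> h)) (at p)"
    by (simp add: linear_eq_inner_sum_Basis[symmetric])
qed

lemma has_derivative_grad:
  fixes g :: "'a::euclidean_space \<Rightarrow> real"
  assumes "(g has_derivative l) (at p)"
  shows "(g has_derivative (\<lambda>h. grad g p \<bullet> h)) (at p)"
  using assms has_derivative_linear[OF assms]
  by (simp add: grad_eq_sum_Basis linear_eq_inner_sum_Basis[symmetric])

lemma has_derivative_partial_fst:
  assumes "((\<lambda>z. f (fst z) (snd z)) has_derivative D) (at (a, b))"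
  shows "((\<lambda>x. f x b) has_derivative (\<lambda>h. D (h, 0))) (at a)"
proof -
  have "((\<lambda>x. (x, b)) has_derivative (\<lambda>h. (h, 0))) (at a)"
    by (auto intro!: derivative_eq_intros)
  from has_derivative_compose[OF this assms] show ?thesis
    by simp
qed

lemma has_derivative_partial_snd:
  assumes "((\<lambda>z. f (fst z) (snd z)) has_derivative D) (at (a, b))"
  shows "((\<lambda>y. f a y) has_derivative (\<lambda>k. D (0, k))) (at b)"
proof -
  have "((\<lambda>y. (a, y)) has_derivative (\<lambda>k. (0, k))) (at b)"
    by (auto intro!: derivative_eq_intros)
  from has_derivative_compose[OF this assms] show ?thesis
    by simp
qed

lemma saddle_op_differentiable:
  fixes f :: "'a::euclidean_space \<Rightarrow> 'b::euclidean_space \<Rightarrow> real"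
  assumes "C2 (\<lambda>z. f (fst z) (snd z))"
  shows "saddle_op f differentiable (at z)"
proof -
  obtain Df D2f where Df: "\<And>p. ((\<lambda>z. f (fst z) (snd z)) has_derivative blinfun_apply (Df p)) (at p)"
    and D2f: "\<And>p. (Df has_derivative blinfun_apply (D2f p)) (at p)"
    using assms unfolding C2_def by blast
  have "saddle_op f = (\<lambda>p. (\<Sum>i\<in>Basis. Df p (i, 0) *\<^sub>R i, - (\<Sum>j\<in>Basis. Df p (0, j) *\<^sub>R j)))"
  proof
    fix p :: "'a \<times> 'b"
    show "saddle_op f p = (\<Sum>i\<in>Basis. Df p (i, 0) *\<^sub>R i, - (\<Sum>j\<in>Basis. Df p (0, j) *\<^sub>R j))"
      using Df[of p] unfolding saddle_op_def
      by (cases p) (simp add: grad_eq_sum_Basis has_derivative_partial_fst has_derivative_partial_snd)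
  qed
  moreover have "(\<lambda>p. Df p v) differentiable (at z)" for v
    using bounded_bilinear.FDERIV[OF bounded_bilinear_blinfun_apply D2f has_derivative_const]
    unfolding differentiable_def by blast
  ultimately show ?thesis
    by (simp add: differentiable_sum differentiable_scaleR differentiable_minus differentiable_Pair)
qed

lemma lipschitz_if_onorm_frechet_derivative_le:
  fixes F :: "'a::real_normed_vector \<Rightarrow> 'b::real_normed_vector"
  assumes "\<And>z. F differentiable (at z)"
    and "\<And>z. onorm (frechet_derivative F (at z)) \<le> L"
  shows "norm (F p - F q) \<le> L * norm (p - q)"
  by (rule differentiable_bound[of UNIV _ "\<lambda>z. frechet_derivative F (at z)"])
    (use assms in \<open>auto simp: frechet_derivative_works[symmetric]\<close>)

lemma saddle_op_lipschitz_imp_partial_grad_lipschitz: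
  assumes lipschitz: "\<And>p q. norm (saddle_op f p - saddle_op f q) \<le> L * norm (p - q)"
  shows "norm (grad (\<lambda>x. f x y) a - grad (\<lambda>x. f x y) b) \<le> L * norm (a - b)"
    and "norm (- grad (f x) c - - grad (f x) d) \<le> L * norm (c - d)"
proof -
  have "norm (grad (\<lambda>x. f x y) a - grad (\<lambda>x. f x y) b) \<le> norm (saddle_op f (a, y) - saddle_op f (b, y))"
    using norm_fst_le by (simp add: saddle_op_def)
  also have "\<dots> \<le> L * norm (a - b)"
    using lipschitz[of "(a, y)" "(b, y)"] by (simp add: norm_Pair)
  finally show "norm (grad (\<lambda>x. f x y) a - grad (\<lambda>x. f x y) b) \<le> L * norm (a - b)" .
  have "norm (- grad (f x) c - - grad (f x) d) \<le> norm (saddle_op f (x, c) - saddle_op f (x, d))"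
    using norm_snd_le by (simp add: saddle_op_def)
  also have "\<dots> \<le> L * norm (c - d)"
    using lipschitz[of "(x, c)" "(x, d)"] by (simp add: norm_Pair)
  finally show "norm (- grad (f x) c - - grad (f x) d) \<le> L * norm (c - d)" .
qed

theorem proposition2p5:
  fixes f :: "real^'n \<Rightarrow> real^'m \<Rightarrow> real" and \<mu> L :: real
  assumes C2f: "C2 (\<lambda>z. f (fst z) (snd z))"
    and mu_pos: "\<mu> > 0"
    and sconvex: "\<And>y. strongly_convex_on UNIV \<mu> (\<lambda>x. f x y)"
    and sconcave: "\<And>x. strongly_convex_on UNIV \<mu> (\<lambda>y. - f x y)"
    and Lbound: "\<And>z. onorm (frechet_derivative (saddle_op f) (at z)) \<le> L"
  shows "\<mu> / L\<^sup>2 * ((1/2) * (norm (saddle_op f (x, y)))\<^sup>2)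
           \<le> (SUP y'. f x y') - (INF x'. f x' y)
       \<and> (SUP y'. f x y') - (INF x'. f x' y)
           \<le> L / \<mu>\<^sup>2 * ((1/2) * (norm (saddle_op f (x, y)))\<^sup>2)"
proof -
  obtain Df where Df: "\<And>p. ((\<lambda>z. f (fst z) (snd z)) has_derivative blinfun_apply (Df p)) (at p)"
    using C2f unfolding C2_def by blast
  have deriv_x: "((\<lambda>x'. f x' y) has_derivative (\<lambda>h. grad (\<lambda>x'. f x' y) a \<bullet> h)) (at a)" for a
    by (rule has_derivative_grad[OF has_derivative_partial_fst[OF Df]])
  have deriv_y: "((\<lambda>y'. - f x y') has_derivative (\<lambda>k. - grad (f x) b \<bullet> k)) (at b)" for b
    using has_derivative_minus[OF has_derivative_grad[OF has_derivative_partial_snd[OF Df]]] by simp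
  note lipschitz = saddle_op_lipschitz_imp_partial_grad_lipschitz
    [OF lipschitz_if_onorm_frechet_derivative_le[OF saddle_op_differentiable[OF C2f] Lbound]]
  have "\<mu> \<le> L"
    by (rule strongly_convex_modulus_le_lipschitz_constant[OF sconvex deriv_x lipschitz(1)])
  note gap_x = strongly_convex_on_suboptimality_bounds[OF sconvex deriv_x lipschitz(1) mu_pos, of x]
  note gap_y = strongly_convex_on_suboptimality_bounds[OF sconcave deriv_y lipschitz(2) mu_pos, of y]
  have gap: "(SUP y'. f x y') - (INF x'. f x' y) = (f x y - (INF x'. f x' y)) + (- f x y - (INF y'. - f x y'))"
    by (simp add: Inf_real_def image_image)
  have norm: "(norm (saddle_op f (x, y)))\<^sup>2 = (norm (grad (\<lambda>x'. f x' y) x))\<^sup>2 + (norm (- grad (f x) y))\<^sup>2"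
    by (simp add: saddle_op_def norm_Pair)
  have weaken: "\<mu> / L\<^sup>2 * ((1/2) * s) \<le> s / (2 * L)" "s / (2 * \<mu>) \<le> L / \<mu>\<^sup>2 * ((1/2) * s)"
    if "0 \<le> s" for s
    using \<open>\<mu> \<le> L\<close> mu_pos that by (auto simp: field_simps power2_eq_square intro!: mult_mono)
  show ?thesis
    unfolding gap norm distrib_left
    using gap_x gap_y
      weaken[OF zero_le_power2[of "norm (grad (\<lambda>x'. f x' y) x)"]]
      weaken[OF zero_le_power2[of "norm (- grad (f x) y)"]]
    by linarith
qed

end
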